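(* Let $p$ be an odd prime, $q\geq1$, and let $L=L(x,dx)$ be the free differential graded Lie algebra over $\mathbb{Z}/p$ on generators $x$ of degree $q+1$ and $y=dx$ of degree $q$. Suppose $L=H\oplus K$ where $K$ is a differential submodule (acyclic) with a basis $\{x_\alpha,y_\alpha,z_\beta,w_\beta\}_{\alpha\in\mathscr I,\beta\in\mathscr J}$ of homogeneous elements with $d x_\alpha=y_\alpha$, $\deg x_\alpha$ even, $dz_\beta=w_\beta$, $\deg z_\beta$ odd. Let $\sigma\subset L$ be the subspace spanned by $\{\sigma_k(x_\alpha):\alpha\in\mathscr I,k\geq1\}$ and $\sigma_N$ its degree-$N$ part. Then for every positive integer $N$, $$\dim_{\mathbb{Z}/p}\sigma_N\leq c_1\,N\,\varphi^{N/p},\qquad c_1=2(q+2)\varphi^{2/p},$$ where $\varphi$ is the unique positive real root of $z^{q+1}-z-1$.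
   Context: For an even-degree element $u$ of a differential graded Lie algebra over $\mathbb{Z}/p$ ($p$ odd), with $\mathrm{ad}(u)(v)=[u,v]$, define $$\tau_k(u)=\mathrm{ad}^{p^k-1}(u)(du),\qquad \sigma_k(u)=\frac12\sum_{j=1}^{p^k-1}\frac1p\binom{p^k}{j}\big[\mathrm{ad}^{j-1}(u)(du),\ \mathrm{ad}^{p^k-1-j}(u)(du)\big].$$ Note $\deg\sigma_k(u)=p^k\deg u-2$. *)

theory Defs
  imports Complex_Main "HOL-Library.Function_Algebras" "HOL-Library.Cardinality" "HOL-Computational_Algebra.Primes"
begin

text \<open>The tensor algebra T(x,y) over a coefficient field: elements are functions from
words to coefficients. The letter True stands for the generator x (degree q+1),
the letter False for the generator y = dx (degree q).\<close>

type_synonym 'k tens = "bool list \<Rightarrow> 'k"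

definition ldeg :: "nat \<Rightarrow> bool \<Rightarrow> nat" where
  "ldeg q b = (if b then q + 1 else q)"

definition wdeg :: "nat \<Rightarrow> bool list \<Rightarrow> nat" where
  "wdeg q w = sum_list (map (ldeg q) w)"

definition homog :: "nat \<Rightarrow> nat \<Rightarrow> 'k::zero tens \<Rightarrow> bool" where
  "homog q n a \<longleftrightarrow> (\<forall>w. a w \<noteq> 0 \<longrightarrow> wdeg q w = n)"

definition gen :: "bool \<Rightarrow> 'k::{zero,one} tens" where
  "gen b = (\<lambda>w. if w = [b] then 1 else 0)"

definition tscale :: "'k::times \<Rightarrow> 'k tens \<Rightarrow> 'k tens" where
  "tscale c a = (\<lambda>w. c * a w)"

text \<open>Graded commutator [a,b] = ab - (-1)^(|a||b|) ba, extended bilinearly.\<close>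
definition bracket :: "nat \<Rightarrow> 'k::comm_ring_1 tens \<Rightarrow> 'k tens \<Rightarrow> 'k tens" where
  "bracket q a b = (\<lambda>w. \<Sum>i\<le>length w. a (take i w) * b (drop i w)
      - (-1) ^ (wdeg q (take i w) * wdeg q (drop i w)) * b (take i w) * a (drop i w))"

text \<open>The differential: the degree -1 derivation with d x = y, d y = 0 and
d(ab) = (da) b + (-1)^|a| a (db).\<close>
definition tdiff :: "nat \<Rightarrow> 'k::comm_ring_1 tens \<Rightarrow> 'k tens" where
  "tdiff q a = (\<lambda>w. \<Sum>j<length w. if w ! j then 0
      else (-1) ^ (wdeg q (take j w)) * a (w[j := True]))"

text \<open>The free graded Lie algebra L(x, dx): the Lie subalgebra of T(x,y) generated by x, y.\<close>
inductive_set freeLie :: "nat \<Rightarrow> 'k::comm_ring_1 tens set" for q where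
  gen: "gen b \<in> freeLie q"
| add: "a \<in> freeLie q \<Longrightarrow> b \<in> freeLie q \<Longrightarrow> a + b \<in> freeLie q"
| smult: "a \<in> freeLie q \<Longrightarrow> tscale c a \<in> freeLie q"
| br: "a \<in> freeLie q \<Longrightarrow> b \<in> freeLie q \<Longrightarrow> bracket q a b \<in> freeLie q"

definition sigmak :: "nat \<Rightarrow> nat \<Rightarrow> nat \<Rightarrow> 'k::field tens \<Rightarrow> 'k tens" where
  "sigmak p q k u = tscale (inverse 2)
     (\<Sum>j\<in>{1..<p ^ k}. tscale (of_nat ((p ^ k choose j) div p))
        (bracket q (((bracket q u) ^^ (j - 1)) (tdiff q u))
                   (((bracket q u) ^^ (p ^ k - 1 - j)) (tdiff q u))))"

definition phi :: "nat \<Rightarrow> real" where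
  "phi q = (THE z. z > 0 \<and> z ^ (q + 1) - z - 1 = 0)"

definition is_basis_fam :: "('i \<Rightarrow> 'k::field tens) \<Rightarrow> 'i set \<Rightarrow> 'k tens set \<Rightarrow> bool" where
  "is_basis_fam f S V \<longleftrightarrow> inj_on f S \<and> \<not> module.dependent tscale (f ` S)
      \<and> module.span tscale (f ` S) = V"

end

theory Submission imports Defs begin

text \<open>The bound comes from counting rather than from the Lie structure. The sigma-elements
of degree N are the \<open>\<sigma>\<^sub>k(x\<^sub>\<alpha>)\<close> with \<open>p\<^sup>k deg x\<^sub>\<alpha> = N + 2\<close>, and \<open>p\<^sup>k \<le> N + 2\<close> forces
\<open>k \<le> N\<close>. For fixed k the \<open>x\<^sub>\<alpha>\<close> in question are linearly independent and homogeneous of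
degree \<open>m = (N + 2)/p\<^sup>k\<close> in the tensor algebra, so there are at most as many as words of
degree m in x and y; since the word count obeys \<open>W(m) = W(m - q - 1) + W(m - q)\<close>, it is
at most \<open>\<phi>\<^sup>m \<le> \<phi>\<^bsup>(N+2)/p\<^esup>\<close>. Summing over k gives \<open>N \<phi>\<^bsup>(N+2)/p\<^esup>\<close>.\<close>

interpretation tv: vector_space "tscale :: 'k::field \<Rightarrow> 'k tens \<Rightarrow> 'k tens"
  by unfold_locales (auto simp: tscale_def fun_eq_iff algebra_simps)

lemma sum_fun_apply: "(sum f A) w = (\<Sum>a\<in>A. f a w)"
  by (induction A rule: infinite_finite_induct) auto

lemma homog_zero [simp]: "homog q n 0"
  by (simp add: homog_def)

lemma homog_add: "homog q n a \<Longrightarrow> homog q n b \<Longrightarrow> homog q n (a + (b :: 'k::monoid_add tens))"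
  unfolding homog_def by (metis add.right_neutral add_0 plus_fun_apply)

lemma homog_tscale: "homog q n a \<Longrightarrow> homog q n (tscale (c::'k::mult_zero) a)"
  unfolding homog_def tscale_def by (metis mult_zero_right)

lemma homog_sum:
  "(\<And>j. j \<in> A \<Longrightarrow> homog q n (f j)) \<Longrightarrow> homog q n (sum f A :: 'k::comm_monoid_add tens)"
  by (induction A rule: infinite_finite_induct) (auto intro: homog_add)

lemma wdeg_append: "wdeg q (u @ v) = wdeg q u + wdeg q v"
  by (simp add: wdeg_def)

lemma homog_bracket:
  assumes "homog q m a" "homog q n b"
  shows "homog q (m + n) (bracket q a b)"
  unfolding homog_def
proof (intro allI impI)
  fix w assume "bracket q a b w \<noteq> 0"
  then obtain i where "a (take i w) * b (drop i w)
      - (-1) ^ (wdeg q (take i w) * wdeg q (drop i w)) * b (take i w) * a (drop i w) \<noteq> 0"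
    unfolding bracket_def by (meson sum.neutral)
  then have "(a (take i w) \<noteq> 0 \<and> b (drop i w) \<noteq> 0) \<or> (b (take i w) \<noteq> 0 \<and> a (drop i w) \<noteq> 0)"
    by auto
  moreover have "wdeg q w = wdeg q (take i w) + wdeg q (drop i w)"
    by (metis append_take_drop_id wdeg_append)
  ultimately show "wdeg q w = m + n"
    using assms unfolding homog_def by auto
qed

lemma wdeg_update_True:
  "j < length w \<Longrightarrow> \<not> w ! j \<Longrightarrow> wdeg q (w[j := True]) = wdeg q w + 1"
proof (induction w arbitrary: j)
  case (Cons b w)
  then show ?case by (cases j) (auto simp: wdeg_def ldeg_def)
qed simp

lemma homog_tdiff:
  assumes "homog q n (a :: 'k::comm_ring_1 tens)"
  shows "homog q (n - 1) (tdiff q a)"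
  unfolding homog_def
proof (intro allI impI)
  fix w assume "tdiff q a w \<noteq> 0"
  then obtain j where j: "j < length w" "\<not> w ! j" "a (w[j := True]) \<noteq> 0"
    unfolding tdiff_def
    by (auto elim!: sum.not_neutral_contains_not_neutral dest!: mult_not_zero split: if_splits)
  then have "wdeg q (w[j := True]) = n"
    using assms unfolding homog_def by blast
  then show "wdeg q w = n - 1"
    using wdeg_update_True[OF j(1,2)] by simp
qed

lemma homog_bracket_iterate:
  assumes "homog q n u" "homog q m v"
  shows "homog q (j * n + m) ((bracket q u ^^ j) v)"
  by (induction j) (use assms homog_bracket in \<open>auto simp: add.assoc\<close>)

lemma homog_sigmak:
  assumes "homog q n u" "p \<ge> 2"
  shows "homog q (p ^ k * n - 2) (sigmak p q k u)"
  unfolding sigmak_def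
proof (intro homog_tscale homog_sum)
  fix j assume j: "j \<in> {1..<p ^ k}"
  have "homog q (((j - 1) * n + (n - 1)) + ((p ^ k - 1 - j) * n + (n - 1)))
     (bracket q ((bracket q u ^^ (j - 1)) (tdiff q u)) ((bracket q u ^^ (p ^ k - 1 - j)) (tdiff q u)))"
    by (intro homog_bracket homog_bracket_iterate homog_tdiff assms)
  moreover have "((j - 1) * n + (n - 1)) + ((p ^ k - 1 - j) * n + (n - 1)) = p ^ k * n - 2"
  proof (cases n)
    case (Suc n')
    obtain j' where j': "j = Suc j'" using j by (cases j) auto
    obtain r where "p ^ k = Suc j' + Suc r"
      using j unfolding j' by (metis atLeastLessThan_iff less_imp_Suc_add add_Suc_right)
    then show ?thesis using Suc j' by (simp add: algebra_simps)
  qed simp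
  ultimately show "homog q (p ^ k * n - 2)
     (bracket q ((bracket q u ^^ (j - 1)) (tdiff q u)) ((bracket q u ^^ (p ^ k - 1 - j)) (tdiff q u)))"
    by simp
qed

subsection \<open>The root \<open>\<phi>\<close>\<close>

lemma root_gt_1:
  fixes z :: real
  assumes "z > 0" "z ^ (q + 1) = z + 1"
  shows "z > 1"
proof (rule ccontr)
  assume "\<not> z > 1"
  then have "z ^ q \<le> 1" using assms(1) by (simp add: power_le_one)
  then have "z ^ (q + 1) \<le> z" using assms(1) by (simp add: mult_left_le)
  with assms(2) show False by simp
qed

lemma positive_root_unique:
  fixes x y :: real
  assumes "0 < x" "x ^ (q + 1) = x + 1" "0 < y" "y ^ (q + 1) = y + 1"
  shows "x = y"
proof -
  have no_smaller: False if "0 < a" "a < b" "a ^ (q + 1) = a + 1" "b ^ (q + 1) = b + 1" for a b :: real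
  proof -
    have "b * (a + 1) = b * (a * a ^ q)" using that(3) by simp
    also have "\<dots> \<le> b * (a * b ^ q)"
      using that by (intro mult_left_mono power_mono) auto
    also have "\<dots> = a * (b + 1)" using that(4) by (simp add: mult.left_commute)
    finally show False using that by (simp add: algebra_simps)
  qed
  show ?thesis
    using no_smaller[of x y] no_smaller[of y x] assms by (cases x y rule: linorder_cases) blast+
qed

lemma phi_root:
  assumes "q \<ge> 1"
  shows "phi q > 1" "phi q ^ (q + 1) = phi q + 1"
proof -
  have "\<exists>x::real. 1 \<le> x \<and> x \<le> 2 \<and> x ^ (q + 1) - x - 1 = 0"
  proof (rule IVT[where f = "\<lambda>z. z ^ (q + 1) - z - 1"])
    have "(2::real) ^ 2 \<le> 2 ^ (q + 1)" by (rule power_increasing) (use assms in auto)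
    then show "0 \<le> (2::real) ^ (q + 1) - 2 - 1" by simp
  qed (auto intro!: continuous_intros)
  then obtain x :: real where "1 \<le> x" "x ^ (q + 1) - x - 1 = 0" by blast
  have "phi q > 0 \<and> phi q ^ (q + 1) - phi q - 1 = 0"
    unfolding phi_def
  proof (rule theI[of _ x])
    fix z :: real assume "z > 0 \<and> z ^ (q + 1) - z - 1 = 0"
    then show "z = x" using \<open>1 \<le> x\<close> \<open>x ^ (q + 1) - x - 1 = 0\<close> positive_root_unique[of z q x] by simp
  qed (use \<open>1 \<le> x\<close> \<open>x ^ (q + 1) - x - 1 = 0\<close> in simp)
  then show root: "phi q ^ (q + 1) = phi q + 1"
    by simp
  show "phi q > 1"
    by (rule root_gt_1[OF _ root]) (use \<open>phi q > 0 \<and> _\<close> in blast)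
qed

subsection \<open>Counting words of a given degree\<close>

definition words_of_degree :: "nat \<Rightarrow> nat \<Rightarrow> bool list set" where
  "words_of_degree q m = {w. wdeg q w = m}"

lemma length_le_wdeg: "q \<ge> 1 \<Longrightarrow> length w \<le> wdeg q w"
  by (induction w) (auto simp: wdeg_def ldeg_def)

lemma finite_words_of_degree:
  assumes "q \<ge> 1"
  shows "finite (words_of_degree q m)"
proof (rule finite_subset)
  show "words_of_degree q m \<subseteq> {w. set w \<subseteq> UNIV \<and> length w \<le> m}"
    using length_le_wdeg[OF assms] by (auto simp: words_of_degree_def)
qed (rule finite_lists_length_le, simp)

lemma words_of_degree_Cons:
  "m \<noteq> 0 \<Longrightarrow> words_of_degree q m
     \<subseteq> Cons True ` {w. wdeg q w + (q + 1) = m} \<union> Cons False ` {w. wdeg q w + q = m}"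
proof
  fix w assume "m \<noteq> 0" "w \<in> words_of_degree q m"
  then show "w \<in> Cons True ` {w. wdeg q w + (q + 1) = m} \<union> Cons False ` {w. wdeg q w + q = m}"
    by (cases w) (auto simp: words_of_degree_def wdeg_def ldeg_def split: if_splits)
qed

text \<open>The induction step uses \<open>\<phi>\<^bsup>r\<^esup> + \<phi>\<^bsup>r+1\<^esup> = \<phi>\<^bsup>r+q+1\<^esup>\<close>.\<close>
lemma card_words_of_degree_le:
  assumes q: "q \<ge> 1"
  shows "real (card (words_of_degree q m)) \<le> phi q ^ m"
proof (induction m rule: less_induct)
  case (less m)
  define T where "T d = {w. wdeg q w + d = m}" for d
  have T_eq: "T d = (if d \<le> m then words_of_degree q (m - d) else {})" for d
    by (auto simp: T_def words_of_degree_def)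
  have T_fin: "finite (T d)" for d
    unfolding T_eq using finite_words_of_degree[OF q] by simp
  have T_card: "real (card (T d)) \<le> (if d \<le> m then phi q ^ (m - d) else 0)" if "d \<ge> 1" for d
  proof (cases "d \<le> m")
    case True
    then have "m - d < m" using that by linarith
    then show ?thesis using True less unfolding T_eq by simp
  qed (simp add: T_eq)
  show ?case
  proof (cases "m = 0")
    case True
    have "words_of_degree q 0 \<subseteq> {[]}"
      using length_le_wdeg[OF q] by (auto simp: words_of_degree_def) (metis le_zero_eq length_0_conv)
    then have "card (words_of_degree q 0) \<le> card {[] :: bool list}"
      by (intro card_mono) auto
    then show ?thesis using True by simp
  next
    case False
    have "words_of_degree q m \<subseteq> Cons True ` T (q + 1) \<union> Cons False ` T q"
      using words_of_degree_Cons[OF False] unfolding T_def .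
    then have "card (words_of_degree q m) \<le> card (Cons True ` T (q + 1) \<union> Cons False ` T q)"
      using T_fin by (intro card_mono) auto
    also have "\<dots> \<le> card (T (q + 1)) + card (T q)"
      by (rule order_trans[OF card_Un_le add_mono[OF card_image_le[OF T_fin] card_image_le[OF T_fin]]])
    finally have "real (card (words_of_degree q m)) \<le> real (card (T (q + 1))) + real (card (T q))"
      by (simp only: of_nat_add[symmetric] of_nat_le_iff)
    also have "\<dots> \<le> (if q + 1 \<le> m then phi q ^ (m - (q + 1)) else 0) + (if q \<le> m then phi q ^ (m - q) else 0)"
      using T_card[of "q + 1"] T_card[of q] q by (intro add_mono) auto
    also have "\<dots> \<le> phi q ^ m"
    proof (cases "q + 1 \<le> m")
      case True
      then obtain r where r: "m = r + (q + 1)" by (metis add.commute le_add_diff_inverse)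
      have "phi q ^ r + phi q ^ Suc r = phi q ^ r * phi q ^ (q + 1)"
        using phi_root[OF q] by (simp add: algebra_simps)
      then show ?thesis using r by (simp add: power_add)
    next
      case False
      then show ?thesis using phi_root[OF q] by (auto intro!: power_increasing)
    qed
    finally show ?thesis .
  qed
qed

definition word_tens :: "bool list \<Rightarrow> 'k::{zero,one} tens" where
  "word_tens u = (\<lambda>w. if w = u then 1 else 0)"

lemma homog_in_span_words:
  assumes q: "q \<ge> 1" and "homog q m (f :: 'k::field tens)"
  shows "f \<in> tv.span (word_tens ` words_of_degree q m)"
proof -
  have "f = (\<Sum>u\<in>words_of_degree q m. tscale (f u) (word_tens u))"
  proof
    fix w
    have "(\<Sum>u\<in>words_of_degree q m. tscale (f u) (word_tens u)) w
        = (\<Sum>u\<in>words_of_degree q m. if u = w then f u else 0)"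
      unfolding sum_fun_apply tscale_def word_tens_def by (intro sum.cong) auto
    also have "\<dots> = (if w \<in> words_of_degree q m then f w else 0)"
      using finite_words_of_degree[OF q] by (simp add: sum.delta')
    also have "\<dots> = f w" using assms(2) unfolding homog_def words_of_degree_def by auto
    finally show "f w = (\<Sum>u\<in>words_of_degree q m. tscale (f u) (word_tens u)) w" by simp
  qed
  then show ?thesis
    by (metis (no_types, lifting) imageI tv.span_base tv.span_scale tv.span_sum)
qed

lemma card_independent_homog_le:
  assumes q: "q \<ge> 1" and "\<not> tv.dependent (f ` D)" and "inj_on f D"
    and "\<forall>\<alpha>\<in>D. homog q m (f \<alpha> :: 'k::field tens)"
  shows "finite D \<and> card D \<le> card (words_of_degree q m)"
proof -
  have "f ` D \<subseteq> tv.span (word_tens ` words_of_degree q m)"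
    using homog_in_span_words[OF q] assms(4) by auto
  then have "finite (f ` D) \<and> card (f ` D) \<le> card (word_tens ` words_of_degree q m :: 'k tens set)"
    using assms(2) finite_words_of_degree[OF q] by (intro tv.independent_span_bound) auto
  moreover have "card (word_tens ` words_of_degree q m :: 'k tens set) \<le> card (words_of_degree q m)"
    by (rule card_image_le[OF finite_words_of_degree[OF q]])
  ultimately show ?thesis
    using assms(3) by (auto simp: card_image dest: finite_imageD)
qed

text \<open>The projection onto degree N is linear, fixes the degree-N generators and kills the others.\<close>
lemma homog_in_span_homog_part:
  fixes f :: "'a \<Rightarrow> 'k::field tens"
  assumes "v \<in> tv.span (f ` A)" "homog q N v" "\<forall>a\<in>A. homog q (d a) (f a)"
  shows "v \<in> tv.span (f ` {a \<in> A. d a = N})"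
proof -
  define proj where "proj u = (\<lambda>w. if wdeg q w = N then u w else 0)" for u :: "'k tens"
  have proj_fixes: "proj u = u" if "homog q N u" for u
    using that unfolding proj_def homog_def by fastforce
  have "proj u \<in> tv.span (f ` {a \<in> A. d a = N})" if "u \<in> tv.span (f ` A)" for u
    using that
  proof (induction rule: tv.span_induct_alt)
    case base
    then show ?case by (metis homog_zero proj_fixes tv.span_zero)
  next
    case (step c x y)
    obtain a where a: "a \<in> A" "x = f a" using step.hyps by blast
    have "proj x \<in> tv.span (f ` {a \<in> A. d a = N})"
    proof (cases "d a = N")
      case True
      then have "proj x = x" and "x \<in> f ` {a \<in> A. d a = N}"
        using a assms(3) proj_fixes by auto
      then show ?thesis by (simp add: tv.span_base)
    next
      case False
      have "proj x = 0" using a assms(3) False unfolding proj_def homog_def by fastforce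
      then show ?thesis by (simp add: tv.span_zero)
    qed
    moreover have "proj (tscale c x + y) = tscale c (proj x) + proj y"
      unfolding proj_def tscale_def by auto
    ultimately show ?case using step.IH by (metis tv.span_add tv.span_scale)
  qed
  with assms(1,2) show ?thesis by (metis proj_fixes)
qed

subsection \<open>Counting the sigma-elements of degree N\<close>

lemma add_two_le_power: "3 \<le> p \<Longrightarrow> 1 \<le> k \<Longrightarrow> k + 2 \<le> (p::nat) ^ k"
proof (induction k)
  case (Suc k)
  then show ?case
    by (cases "k = 0") (auto intro: order_trans[OF _ mult_le_mono1[of 3 p]])
qed simp

lemma card_pairs_of_degree_le:
  fixes N :: nat
  assumes q: "q \<ge> 1" and p: "p \<ge> 3" and "\<not> tv.dependent (xa ` I)" and "inj_on xa I"
    and deg: "\<forall>\<alpha>\<in>I. homog q (n \<alpha>) (xa \<alpha> :: 'k::field tens)"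
  defines "P \<equiv> {(\<alpha>, k). \<alpha> \<in> I \<and> k \<ge> 1 \<and> p ^ k * n \<alpha> = N + 2}"
  shows "finite P \<and> real (card P) \<le> real N * phi q powr (real (N + 2) / real p)"
proof -
  define A where "A k = {\<alpha> \<in> I. p ^ k * n \<alpha> = N + 2}" for k
  have P_eq: "P = (\<Union>k\<in>{1..N}. (\<lambda>\<alpha>. (\<alpha>, k)) ` A k)"
  proof -
    have "k \<le> N" if "k \<ge> 1" "p ^ k * n \<alpha> = N + 2" for \<alpha> k
    proof -
      have "n \<alpha> \<noteq> 0" using that(2) by (cases "n \<alpha>") auto
      then have "p ^ k \<le> p ^ k * n \<alpha>" by simp
      then have "p ^ k \<le> N + 2" using that(2) by simp
      then show ?thesis using add_two_le_power[OF p that(1)] by linarith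
    qed
    then show ?thesis unfolding P_def A_def by fastforce
  qed
  have A_bound: "finite (A k) \<and> real (card (A k)) \<le> phi q powr (real (N + 2) / real p)"
    if k: "k \<ge> 1" for k
  proof -
    define m where "m = (N + 2) div p ^ k"
    have "homog q m (xa \<alpha>)" if "\<alpha> \<in> A k" for \<alpha>
    proof -
      have "p ^ k * n \<alpha> = N + 2" "p ^ k \<noteq> 0" using that p unfolding A_def by auto
      then have "n \<alpha> = m" unfolding m_def by (metis nonzero_mult_div_cancel_left)
      then show ?thesis using deg that unfolding A_def by auto
    qed
    moreover have "A k \<subseteq> I" unfolding A_def by auto
    ultimately have "finite (A k) \<and> card (A k) \<le> card (words_of_degree q m)"
      using card_independent_homog_le[OF q] inj_on_subset[OF \<open>inj_on xa I\<close>]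
        tv.independent_mono[OF \<open>\<not> tv.dependent (xa ` I)\<close>] by (meson image_mono)
    moreover have "real (card (words_of_degree q m)) \<le> phi q powr real m"
      using card_words_of_degree_le[OF q] phi_root(1)[OF q] by (simp add: powr_realpow)
    moreover have "real m \<le> real (N + 2) / real p"
    proof -
      have "m \<le> (N + 2) div p"
        unfolding m_def by (rule div_le_mono2) (use p k self_le_power[of p k] in auto)
      moreover have "real ((N + 2) div p) \<le> real (N + 2) / real p"
        by (rule of_nat_div_le_of_nat)
      ultimately show ?thesis by linarith
    qed
    then have "phi q powr real m \<le> phi q powr (real (N + 2) / real p)"
      using phi_root(1)[OF q] by (intro powr_mono) auto
    ultimately show ?thesis by linarith
  qed
  have fin: "finite P" unfolding P_eq using A_bound by auto
  have "card P \<le> (\<Sum>k\<in>{1..N}. card ((\<lambda>\<alpha>. (\<alpha>, k)) ` A k))"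
    unfolding P_eq by (rule card_UN_le) simp
  also have "\<dots> \<le> (\<Sum>k\<in>{1..N}. card (A k))"
    by (intro sum_mono card_image_le) (use A_bound in auto)
  finally have "real (card P) \<le> (\<Sum>k\<in>{1..N}. real (card (A k)))"
    by (metis of_nat_le_iff of_nat_sum)
  also have "\<dots> \<le> (\<Sum>k\<in>{1..N}. phi q powr (real (N + 2) / real p))"
    by (intro sum_mono) (use A_bound in auto)
  finally show ?thesis using fin by simp
qed

lemma card_independent_sigma_part_le:
  fixes xa :: "'i \<Rightarrow> 'k::field tens"
  assumes q: "q \<ge> 1" and p: "p \<ge> 3" and N: "N > 0"
    and "\<not> tv.dependent (xa ` I)" and "inj_on xa I"
    and deg: "\<forall>\<alpha>\<in>I. homog q (n \<alpha>) (xa \<alpha>)"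
    and B: "B \<subseteq> {v \<in> tv.span {sigmak p q k (xa \<alpha>) | \<alpha> k. \<alpha> \<in> I \<and> k \<ge> 1}. homog q N v}"
    and "\<not> tv.dependent B"
  shows "finite B \<and> real (card B) \<le> real N * phi q powr (real (N + 2) / real p)"
proof -
  define P where "P = {(\<alpha>, k). \<alpha> \<in> I \<and> k \<ge> 1 \<and> p ^ k * n \<alpha> = N + 2}"
  define sigma where "sigma = (\<lambda>(\<alpha>, k). sigmak p q k (xa \<alpha>))"
  define sdeg where "sdeg = (\<lambda>(\<alpha>, k). p ^ k * n \<alpha> - 2)"
  define Ik where "Ik = {(\<alpha>, k). \<alpha> \<in> I \<and> (k::nat) \<ge> 1}"
  have span_eq: "{sigmak p q k (xa \<alpha>) | \<alpha> k. \<alpha> \<in> I \<and> k \<ge> 1} = sigma ` Ik"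
    unfolding sigma_def Ik_def by auto
  have "\<forall>a\<in>Ik. homog q (sdeg a) (sigma a)"
    using deg p unfolding Ik_def sdeg_def sigma_def by (auto intro: homog_sigmak)
  moreover have "{a \<in> Ik. sdeg a = N} = P"
    using N unfolding Ik_def sdeg_def P_def by auto
  ultimately have "B \<subseteq> tv.span (sigma ` P)"
    using B homog_in_span_homog_part[of _ sigma Ik q N sdeg] unfolding span_eq by auto
  moreover have "finite P \<and> real (card P) \<le> real N * phi q powr (real (N + 2) / real p)"
    unfolding P_def by (rule card_pairs_of_degree_le) (use assms in auto)
  ultimately have "finite B \<and> card B \<le> card (sigma ` P)"
    using \<open>\<not> tv.dependent B\<close> by (intro tv.independent_span_bound) auto
  moreover have "card (sigma ` P) \<le> card P"
    using \<open>finite P \<and> _\<close> card_image_le by blast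
  ultimately show ?thesis
    using \<open>finite P \<and> _\<close> by (meson dual_order.trans of_nat_le_iff)
qed

lemma is_basis_fam_reindex:
  assumes "is_basis_fam f S V" "g ` T \<subseteq> S" "inj_on g T"
  shows "inj_on (f \<circ> g) T" "\<not> tv.dependent ((f \<circ> g) ` T)"
  using assms tv.independent_mono[of "f ` S" "f ` g ` T"] unfolding is_basis_fam_def
  by (auto simp: image_comp intro: comp_inj_on inj_on_subset)

theorem mainTheorem14:
  fixes p q N :: nat and H K :: "'k::field tens set"
    and I :: "'i set" and J :: "'j set"
    and xa ya :: "'i \<Rightarrow> 'k tens" and zb wb :: "'j \<Rightarrow> 'k tens"
  assumes "prime p" and "odd p" and "CARD('k) = p" and "q \<ge> 1"
    and "module.subspace tscale H" and "module.subspace tscale K"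
    and "H \<subseteq> freeLie q" and "K \<subseteq> freeLie q"
    and "H \<inter> K = {0}" and "{h + k | h k. h \<in> H \<and> k \<in> K} = freeLie q"
    and "tdiff q ` K \<subseteq> K"
    and "is_basis_fam (case_sum (case_sum xa ya) (case_sum zb wb))
           (Inl ` (Inl ` I \<union> Inr ` I) \<union> Inr ` (Inl ` J \<union> Inr ` J)) K"
    and "\<forall>\<alpha>\<in>I. tdiff q (xa \<alpha>) = ya \<alpha> \<and> (\<exists>n. even n \<and> homog q n (xa \<alpha>))
                \<and> (\<exists>n. homog q n (ya \<alpha>))"
    and "\<forall>\<beta>\<in>J. tdiff q (zb \<beta>) = wb \<beta> \<and> (\<exists>n. odd n \<and> homog q n (zb \<beta>))
                \<and> (\<exists>n. homog q n (wb \<beta>))"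
    and "N > 0"
  shows "\<forall>B. B \<subseteq> {v \<in> module.span tscale {sigmak p q k (xa \<alpha>) | \<alpha> k. \<alpha> \<in> I \<and> k \<ge> 1}.
                      homog q N v}
             \<and> \<not> module.dependent tscale B
         \<longrightarrow> finite B \<and> real (card B) \<le> (2 * (real q + 2) * phi q powr (2 / real p))
                                         * real N * phi q powr (real N / real p)"
proof (intro allI impI)
  fix B assume B: "B \<subseteq> {v \<in> tv.span {sigmak p q k (xa \<alpha>) | \<alpha> k. \<alpha> \<in> I \<and> k \<ge> 1}.
                      homog q N v} \<and> \<not> tv.dependent B"
  have p: "p \<ge> 3"
    using prime_ge_2_nat[OF \<open>prime p\<close>] \<open>odd p\<close> by (cases "p = 2") auto
  obtain n where n: "\<forall>\<alpha>\<in>I. homog q (n \<alpha>) (xa \<alpha>)"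
    using assms(13) bchoice[of I "\<lambda>\<alpha> n. homog q n (xa \<alpha>)"] by blast
  have xa: "case_sum (case_sum xa ya) (case_sum zb wb) \<circ> (Inl \<circ> Inl) = xa"
    by auto
  have "inj_on xa I" "\<not> tv.dependent (xa ` I)"
    using is_basis_fam_reindex[OF assms(12), of "Inl \<circ> Inl" I] unfolding xa
    by (auto simp: inj_on_def)
  then have "finite B" "real (card B) \<le> real N * phi q powr (real (N + 2) / real p)"
    using card_independent_sigma_part_le[OF \<open>q \<ge> 1\<close> p \<open>N > 0\<close> _ _ n] B by blast+
  note this(2)
  also have "real N * phi q powr (real (N + 2) / real p)
      = 1 * phi q powr (2 / real p) * real N * phi q powr (real N / real p)"
    by (simp add: add_divide_distrib powr_add)
  also have "\<dots> \<le> 2 * (real q + 2) * phi q powr (2 / real p) * real N * phi q powr (real N / real p)"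
    by (intro mult_right_mono) auto
  finally show "finite B \<and> real (card B) \<le> (2 * (real q + 2) * phi q powr (2 / real p))
                                         * real N * phi q powr (real N / real p)"
    using \<open>finite B\<close> by simp
qed

end
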